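(* Let $(\Omega,\mathcal F,(\mathcal F_t)_{t\in[0,T]},P)$ be a filtered probability space and let $I=\{t_0,t_1,\ldots,t_n\}\subset[0,T]$ with $t_0<t_1<\cdots<t_n$; set $t_{n+1}:=T$. Let $D=(D_t)_{t\in I}$ be a family of maps $D_t:L^2(\mathcal F_T)\to L^2_+(\mathcal F_t)$ with $D_t(0)=0$. Then $D$ satisfies (D1)–(D3) for every $t\in I$ and (D5) for all $t,s\in I$ with $t\le s$ if and only if there exists a collection $(\tilde D_t)_{t\in I}$ of $\mathcal F_t$-conditional convex deviation measures such that $$D_t(X)=E\Big[\sum_{t_i\in I:\,t_i\ge t}\tilde D_{t_i}\big(E[X\mid\mathcal F_{t_{i+1}}]-E[X\mid\mathcal F_{t_i}]\big)\,\Big|\,\mathcal F_t\Big],\qquad t\in I,\ X\in L^2(\mathcal F_T).$$ In particular, if $D$ satisfies (D1)–(D3) and (D5) on $I$, this representation holds with $\tilde D_{t_i}=D_{t_i}$, $t_i\in I$.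
   Context: Equalities and inequalities between random variables hold $P$-a.s. $L^2(\mathcal F_t)$ is the space of $\mathcal F_t$-measurable square-integrable random variables; $L^2_+(\mathcal F_t)$, $L^\infty(\mathcal F_t)$ denote its non-negative and bounded elements. For a map $D_t:L^2(\mathcal F_T)\to L^2_+(\mathcal F_t)$ the properties are: (D1) $D_t(X+m)=D_t(X)$ for all $m\in L^\infty(\mathcal F_t)$; (D2) $D_t(X)\ge0$ for all $X$, and $D_t(X)=0$ iff $X$ is $\mathcal F_t$-measurable; (D3) $D_t(\lambda X+(1-\lambda)Y)\le\lambda D_t(X)+(1-\lambda)D_t(Y)$ for all $X,Y\in L^2(\mathcal F_T)$ and all $\lambda\in L^\infty(\mathcal F_t)$ with $0\le\lambda\le1$; (D5) $D_t(X)=D_t(E[X\mid\mathcal F_s])+E[D_s(X)\mid\mathcal F_t]$ for $t\le s$. An $\mathcal F_t$-conditional convex deviation measure is a map $D_t:L^2(\mathcal F_T)\to L^2_+(\mathcal F_t)$ with $D_t(0)=0$ satisfying (D1)–(D3). *)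

theory Defs
  imports "HOL-Probability.Probability"
begin

definition filtration :: "'a measure \<Rightarrow> real \<Rightarrow> (real \<Rightarrow> 'a measure) \<Rightarrow> bool" where
  "filtration M T F \<longleftrightarrow>
     (\<forall>t. 0 \<le> t \<and> t \<le> T \<longrightarrow> subalgebra M (F t)) \<and>
     (\<forall>s t. 0 \<le> s \<and> s \<le> t \<and> t \<le> T \<longrightarrow> sets (F s) \<subseteq> sets (F t))"

text \<open>Representatives of elements of L^2(G), L^2_+(G), L^infinity(G) (G a sub-sigma-algebra of M).\<close>
definition L2 :: "'a measure \<Rightarrow> 'a measure \<Rightarrow> ('a \<Rightarrow> real) set" where
  "L2 M G = {X. X \<in> borel_measurable G \<and> integrable M (\<lambda>\<omega>. (X \<omega>)\<^sup>2)}"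

definition L2_plus :: "'a measure \<Rightarrow> 'a measure \<Rightarrow> ('a \<Rightarrow> real) set" where
  "L2_plus M G = {X. X \<in> L2 M G \<and> (AE \<omega> in M. 0 \<le> X \<omega>)}"

definition Linf :: "'a measure \<Rightarrow> 'a measure \<Rightarrow> ('a \<Rightarrow> real) set" where
  "Linf M G = {X. X \<in> borel_measurable G \<and> (\<exists>C. AE \<omega> in M. \<bar>X \<omega>\<bar> \<le> C)}"

definition L2_map :: "'a measure \<Rightarrow> 'a measure \<Rightarrow> 'a measure \<Rightarrow> (('a \<Rightarrow> real) \<Rightarrow> ('a \<Rightarrow> real)) \<Rightarrow> bool" where
  "L2_map M FT G D \<longleftrightarrow>
     (\<forall>X \<in> L2 M FT. D X \<in> L2_plus M G) \<and>
     (\<forall>X \<in> L2 M FT. \<forall>Y \<in> L2 M FT. (AE \<omega> in M. X \<omega> = Y \<omega>) \<longrightarrow> (AE \<omega> in M. D X \<omega> = D Y \<omega>))"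

definition D1 :: "'a measure \<Rightarrow> 'a measure \<Rightarrow> 'a measure \<Rightarrow> (('a \<Rightarrow> real) \<Rightarrow> ('a \<Rightarrow> real)) \<Rightarrow> bool" where
  "D1 M FT G D \<longleftrightarrow>
     (\<forall>X \<in> L2 M FT. \<forall>m \<in> Linf M G. AE \<omega> in M. D (\<lambda>x. X x + m x) \<omega> = D X \<omega>)"

definition D2 :: "'a measure \<Rightarrow> 'a measure \<Rightarrow> 'a measure \<Rightarrow> (('a \<Rightarrow> real) \<Rightarrow> ('a \<Rightarrow> real)) \<Rightarrow> bool" where
  "D2 M FT G D \<longleftrightarrow>
     (\<forall>X \<in> L2 M FT. (AE \<omega> in M. 0 \<le> D X \<omega>) \<and>
        ((AE \<omega> in M. D X \<omega> = 0) \<longleftrightarrow> (\<exists>Y \<in> borel_measurable G. AE \<omega> in M. X \<omega> = Y \<omega>)))"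

definition D3 :: "'a measure \<Rightarrow> 'a measure \<Rightarrow> 'a measure \<Rightarrow> (('a \<Rightarrow> real) \<Rightarrow> ('a \<Rightarrow> real)) \<Rightarrow> bool" where
  "D3 M FT G D \<longleftrightarrow>
     (\<forall>X \<in> L2 M FT. \<forall>Y \<in> L2 M FT. \<forall>l \<in> Linf M G.
        (AE \<omega> in M. 0 \<le> l \<omega> \<and> l \<omega> \<le> 1) \<longrightarrow>
        (AE \<omega> in M. D (\<lambda>x. l x * X x + (1 - l x) * Y x) \<omega> \<le> l \<omega> * D X \<omega> + (1 - l \<omega>) * D Y \<omega>))"

definition cond_conv_dev :: "'a measure \<Rightarrow> 'a measure \<Rightarrow> 'a measure \<Rightarrow> (('a \<Rightarrow> real) \<Rightarrow> ('a \<Rightarrow> real)) \<Rightarrow> bool" where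
  "cond_conv_dev M FT G D \<longleftrightarrow>
     L2_map M FT G D \<and> (AE \<omega> in M. D (\<lambda>_. 0) \<omega> = 0) \<and> D1 M FT G D \<and> D2 M FT G D \<and> D3 M FT G D"

definition next_time :: "(nat \<Rightarrow> real) \<Rightarrow> nat \<Rightarrow> real \<Rightarrow> nat \<Rightarrow> real" where
  "next_time tt n T i = (if i < n then tt (Suc i) else T)"

definition D5 :: "'a measure \<Rightarrow> (real \<Rightarrow> 'a measure) \<Rightarrow> real \<Rightarrow> (nat \<Rightarrow> real) \<Rightarrow> nat
                   \<Rightarrow> (nat \<Rightarrow> ('a \<Rightarrow> real) \<Rightarrow> ('a \<Rightarrow> real)) \<Rightarrow> bool" where
  "D5 M F T tt n D \<longleftrightarrow>
     (\<forall>i j X. i \<le> j \<and> j \<le> n \<and> X \<in> L2 M (F T) \<longrightarrow>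
        (AE \<omega> in M. D i X \<omega> =
            D i (real_cond_exp M (F (tt j)) X) \<omega> + real_cond_exp M (F (tt i)) (D j X) \<omega>))"

end

theory Submission
  imports Defs
begin

text \<open>
  (D1) and (D3) together make D_t invariant under adding any square-integrable F_t-measurable
  variable, not only bounded ones. With this, (D5) for consecutive grid points becomes the
  backward recursion
    D_{t_i}(X) = D_{t_i}(E[X | F_{t_{i+1}}] - E[X | F_{t_i}]) + E[D_{t_{i+1}}(X) | F_{t_i}],
  which unrolls into the representation with D itself as the family of deviation measures.

  Conversely, a map of the represented form inherits (D1) and (D3) term by term: for j >= i the
  increments E[X | F_{t_{j+1}}] - E[X | F_{t_j}] do not see F_{t_i}-measurable shifts and commute
  with F_{t_i}-measurable convex weights. It vanishes only if every increment does, which by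
  telescoping means that X is F_{t_i}-measurable; this is (D2). Finally (D5) is the tower
  property: the increments of E[X | F_{t_j}] agree with those of X before t_j and vanish from
  t_j on.
\<close>

section \<open>Square-integrable random variables\<close>

lemma L2_subalgebra_mono: "subalgebra H G \<Longrightarrow> X \<in> L2 M G \<Longrightarrow> X \<in> L2 M H"
  unfolding L2_def by (auto intro: measurable_from_subalg)

lemma Linf_subalgebra_mono: "subalgebra H G \<Longrightarrow> l \<in> Linf M G \<Longrightarrow> l \<in> Linf M H"
  unfolding Linf_def by (auto intro: measurable_from_subalg)

lemma L2_borel_measurable: "subalgebra M G \<Longrightarrow> X \<in> L2 M G \<Longrightarrow> X \<in> borel_measurable M"
  unfolding L2_def by (auto intro: measurable_from_subalg)

lemma L2_zero: "(\<lambda>_. 0) \<in> L2 M G"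
  unfolding L2_def by simp

lemma L2_uminus: "X \<in> L2 M G \<Longrightarrow> (\<lambda>x. - X x) \<in> L2 M G"
  unfolding L2_def by simp

lemma L2_add:
  assumes G: "subalgebra M G" and X: "X \<in> L2 M G" and Y: "Y \<in> L2 M G"
  shows "(\<lambda>x. X x + Y x) \<in> L2 M G"
proof -
  have [measurable]: "X \<in> borel_measurable M" "Y \<in> borel_measurable M"
    using G X Y by (simp_all add: L2_borel_measurable)
  have sq_sum_le: "(a + b)\<^sup>2 \<le> 2 * a\<^sup>2 + 2 * b\<^sup>2" for a b :: real
    using zero_le_power2[of "a - b"] by (simp add: power2_sum power2_diff)
  have "integrable M (\<lambda>x. (X x + Y x)\<^sup>2)"
  proof (rule Bochner_Integration.integrable_bound)
    show "integrable M (\<lambda>x. 2 * (X x)\<^sup>2 + 2 * (Y x)\<^sup>2)"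
      using X Y unfolding L2_def by auto
    show "AE x in M. norm ((X x + Y x)\<^sup>2) \<le> norm (2 * (X x)\<^sup>2 + 2 * (Y x)\<^sup>2)"
      using sq_sum_le by simp
  qed measurable
  with X Y show ?thesis
    unfolding L2_def by auto
qed

lemma L2_diff:
  "subalgebra M G \<Longrightarrow> X \<in> L2 M G \<Longrightarrow> Y \<in> L2 M G \<Longrightarrow> (\<lambda>x. X x - Y x) \<in> L2 M G"
  using L2_add[where X=X and Y="\<lambda>x. - Y x"] L2_uminus[of Y] by simp

lemma L2_sum:
  assumes "subalgebra M G" "finite I" "\<And>i. i \<in> I \<Longrightarrow> f i \<in> L2 M G"
  shows "(\<lambda>x. \<Sum>i\<in>I. f i x) \<in> L2 M G"
  using assms(2,3) by (induction I rule: finite_induct) (simp_all add: L2_zero L2_add assms(1))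

lemma L2_mult_Linf:
  assumes G: "subalgebra M G" and X: "X \<in> L2 M G" and l: "l \<in> Linf M G"
  shows "(\<lambda>x. l x * X x) \<in> L2 M G"
proof -
  obtain C where C: "AE x in M. \<bar>l x\<bar> \<le> C"
    using l unfolding Linf_def by auto
  have [measurable]: "X \<in> borel_measurable M" "l \<in> borel_measurable M"
    using G X l by (auto simp: L2_borel_measurable Linf_def intro: measurable_from_subalg)
  have "integrable M (\<lambda>x. (l x * X x)\<^sup>2)"
  proof (rule Bochner_Integration.integrable_bound)
    show "integrable M (\<lambda>x. C\<^sup>2 * (X x)\<^sup>2)"
      using X unfolding L2_def by auto
    show "AE x in M. norm ((l x * X x)\<^sup>2) \<le> norm (C\<^sup>2 * (X x)\<^sup>2)"
      using C
    proof eventually_elim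
      case (elim x)
      then have "(l x)\<^sup>2 \<le> C\<^sup>2"
        by (metis abs_ge_zero power2_abs power_mono)
      then show ?case
        by (simp add: power_mult_distrib mult_right_mono)
    qed
  qed measurable
  with X l show ?thesis
    unfolding L2_def Linf_def by auto
qed

lemma Linf_one_minus: "l \<in> Linf M G \<Longrightarrow> (\<lambda>x. 1 - l x) \<in> Linf M G"
proof -
  assume l: "l \<in> Linf M G"
  then obtain C where "AE x in M. \<bar>l x\<bar> \<le> C"
    unfolding Linf_def by auto
  then have "AE x in M. \<bar>1 - l x\<bar> \<le> 1 + C"
    by eventually_elim arith
  with l show ?thesis
    unfolding Linf_def by auto
qed

lemma L2_convex_combination:
  "subalgebra M G \<Longrightarrow> X \<in> L2 M G \<Longrightarrow> Y \<in> L2 M G \<Longrightarrow> l \<in> Linf M G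
    \<Longrightarrow> (\<lambda>x. l x * X x + (1 - l x) * Y x) \<in> L2 M G"
  by (intro L2_add L2_mult_Linf Linf_one_minus)

lemma L2_map_cong:
  "L2_map M FT G D \<Longrightarrow> X \<in> L2 M FT \<Longrightarrow> Y \<in> L2 M FT \<Longrightarrow> AE x in M. X x = Y x
    \<Longrightarrow> AE x in M. D X x = D Y x"
  unfolding L2_map_def by blast

lemma sum_atLeastAtMost_split:
  "(i::nat) \<le> j \<Longrightarrow> j \<le> n \<Longrightarrow> sum f {i..n} = sum f {i..<j} + sum f {j..n}"
  by (metis atLeastLessThanSuc_atLeastAtMost le_imp_less_Suc less_imp_le_nat sum.atLeastLessThan_concat)

context finite_measure
begin

lemma L2_integrable: "subalgebra M G \<Longrightarrow> X \<in> L2 M G \<Longrightarrow> integrable M X"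
  using square_integrable_imp_integrable L2_borel_measurable unfolding L2_def by blast

lemma L2_of_Linf:
  assumes G: "subalgebra M G" and l: "l \<in> Linf M G"
  shows "l \<in> L2 M G"
proof -
  have "(\<lambda>_. 1) \<in> L2 M G"
    unfolding L2_def by simp
  from L2_mult_Linf[OF G this l] show ?thesis
    by simp
qed

lemma L2_real_cond_exp:
  assumes "sigma_finite_subalgebra M G" "subalgebra M H" "X \<in> L2 M H"
  shows "real_cond_exp M G X \<in> L2 M G"
proof -
  have "integrable M (\<lambda>x. (real_cond_exp M G X x)\<^sup>2)"
    by (rule sigma_finite_subalgebra.integrable_convex_cond_exp[OF assms(1), of X UNIV 0 0])
      (use assms(3) L2_integrable[OF assms(2,3)] in \<open>simp_all add: L2_def convex_power2\<close>)
  then show ?thesis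
    unfolding L2_def by simp
qed

section \<open>Translation invariance of conditional deviation measures\<close>

text \<open>(D1) only allows bounded shifts. On the event \<open>{\<bar>m\<bar> \<le> k}\<close>, (D3) with the indicator of
  this event as weight bounds \<open>D (X + m)\<close> by \<open>D\<close> of \<open>X\<close> plus the truncation of \<open>m\<close>, to which
  (D1) applies; letting \<open>k\<close> run through \<open>\<nat>\<close> covers almost all of \<open>\<Omega>\<close>.\<close>

lemma D1_D3_imp_translation_le:
  assumes FT: "subalgebra M FT" and GFT: "subalgebra FT G"
    and d1: "D1 M FT G D" and d3: "D3 M FT G D"
    and X: "X \<in> L2 M FT" and m: "m \<in> L2 M G"
  shows "AE x in M. D (\<lambda>x. X x + m x) x \<le> D X x"
proof -
  have G: "subalgebra M G"
    using FT GFT unfolding subalgebra_def by auto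
  have [measurable]: "m \<in> borel_measurable G"
    using m unfolding L2_def by simp
  have Xm: "(\<lambda>x. X x + m x) \<in> L2 M FT"
    by (rule L2_add[OF FT X L2_subalgebra_mono[OF GFT m]])
  have truncated: "AE x in M. \<bar>m x\<bar> \<le> real k \<longrightarrow> D (\<lambda>x. X x + m x) x \<le> D X x" for k :: nat
  proof -
    define l where "l x = (if \<bar>m x\<bar> \<le> real k then 1 else 0 :: real)" for x
    define mk where "mk x = l x * m x" for x
    have l: "l \<in> Linf M G"
      unfolding Linf_def l_def by auto
    have mk: "mk \<in> Linf M G"
      unfolding Linf_def mk_def l_def by auto
    have Xmk: "(\<lambda>x. X x + mk x) \<in> L2 M FT"
      by (rule L2_add[OF FT X L2_subalgebra_mono[OF GFT L2_of_Linf[OF G mk]]])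
    have "(\<lambda>x. l x * (X x + mk x) + (1 - l x) * (X x + m x)) = (\<lambda>x. X x + m x)"
      by (auto simp: l_def mk_def)
    moreover have "AE x in M. 0 \<le> l x \<and> l x \<le> 1"
      by (simp add: l_def)
    ultimately have "AE x in M. D (\<lambda>x. X x + m x) x
        \<le> l x * D (\<lambda>x. X x + mk x) x + (1 - l x) * D (\<lambda>x. X x + m x) x"
      using d3[unfolded D3_def, rule_format, OF Xmk Xm l] by simp
    moreover have "AE x in M. D (\<lambda>x. X x + mk x) x = D X x"
      using d1 X mk unfolding D1_def by blast
    ultimately show ?thesis
      by eventually_elim (auto simp: l_def)
  qed
  have "AE x in M. \<forall>k::nat. \<bar>m x\<bar> \<le> real k \<longrightarrow> D (\<lambda>x. X x + m x) x \<le> D X x"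
    unfolding AE_all_countable by (intro allI truncated)
  then show ?thesis
    by eventually_elim (use real_nat_ceiling_ge in blast)
qed

lemma D1_D3_imp_translation_invariant:
  assumes FT: "subalgebra M FT" and GFT: "subalgebra FT G"
    and d1: "D1 M FT G D" and d3: "D3 M FT G D"
    and X: "X \<in> L2 M FT" and m: "m \<in> L2 M G"
  shows "AE x in M. D (\<lambda>x. X x + m x) x = D X x"
proof -
  have Xm: "(\<lambda>x. X x + m x) \<in> L2 M FT"
    by (rule L2_add[OF FT X L2_subalgebra_mono[OF GFT m]])
  have "AE x in M. D (\<lambda>x. X x + m x) x \<le> D X x"
    by (rule D1_D3_imp_translation_le[OF assms])
  moreover have "AE x in M. D (\<lambda>x. (X x + m x) + - m x) x \<le> D (\<lambda>x. X x + m x) x"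
    by (rule D1_D3_imp_translation_le[OF FT GFT d1 d3 Xm L2_uminus[OF m]])
  ultimately show ?thesis
    by eventually_elim simp
qed

end

section \<open>Conditional expectations along the grid\<close>

locale filtered_grid = prob_space M for M :: "'a measure" +
  fixes F :: "real \<Rightarrow> 'a measure" and T :: real and tt :: "nat \<Rightarrow> real" and n :: nat
  assumes filtration: "filtration M T F"
    and tt_0_nonneg: "0 \<le> tt 0" and tt_n_le_T: "tt n \<le> T"
    and tt_strict_mono: "\<And>i. i < n \<Longrightarrow> tt i < tt (Suc i)"
begin

abbreviation E :: "real \<Rightarrow> ('a \<Rightarrow> real) \<Rightarrow> 'a \<Rightarrow> real"
  where "E t X \<equiv> real_cond_exp M (F t) X"

abbreviation L2T :: "('a \<Rightarrow> real) set"
  where "L2T \<equiv> L2 M (F T)"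

abbreviation t_next :: "nat \<Rightarrow> real"
  where "t_next j \<equiv> next_time tt n T j"

abbreviation increment :: "nat \<Rightarrow> ('a \<Rightarrow> real) \<Rightarrow> 'a \<Rightarrow> real"
  where "increment j X \<equiv> \<lambda>y. E (t_next j) X y - E (tt j) X y"

abbreviation increment_sum ::
    "(nat \<Rightarrow> ('a \<Rightarrow> real) \<Rightarrow> 'a \<Rightarrow> real) \<Rightarrow> nat \<Rightarrow> ('a \<Rightarrow> real) \<Rightarrow> 'a \<Rightarrow> real"
  where "increment_sum Dt i X \<equiv> \<lambda>x. \<Sum>j\<in>{i..n}. Dt j (increment j X) x"

lemma tt_mono: "i \<le> j \<Longrightarrow> j \<le> n \<Longrightarrow> tt i \<le> tt j"
proof (induction j rule: dec_induct)
  case (step j)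
  then show ?case
    using tt_strict_mono[of j] by simp
qed simp

lemma tt_in_range: "i \<le> n \<Longrightarrow> tt i \<in> {0..T}"
  using tt_mono[of 0 i] tt_mono[of i n] tt_0_nonneg tt_n_le_T by simp

lemma T_in_range: "T \<in> {0..T}"
  using tt_in_range[of n] by simp

lemma t_next_in_range: "j \<le> n \<Longrightarrow> t_next j \<in> {tt j..T}"
  using tt_strict_mono[of j] tt_in_range[of j] tt_in_range[of "Suc j"]
  by (auto simp: next_time_def)

lemma t_next_le_tt: "j < k \<Longrightarrow> k \<le> n \<Longrightarrow> t_next j \<le> tt k"
  using tt_mono[of "Suc j" k] by (simp add: next_time_def)

lemma subalgebra_F: "t \<in> {0..T} \<Longrightarrow> subalgebra M (F t)"
  using filtration unfolding filtration_def by simp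

lemma subalgebra_F_mono: "s \<in> {0..T} \<Longrightarrow> t \<in> {0..T} \<Longrightarrow> s \<le> t \<Longrightarrow> subalgebra (F t) (F s)"
  using filtration subalgebra_F[of s] subalgebra_F[of t]
  unfolding filtration_def subalgebra_def by simp

lemma sigma_finite_F: "t \<in> {0..T} \<Longrightarrow> sigma_finite_subalgebra M (F t)"
  by (intro finite_measure_subalgebra_is_sigma_finite)
    (simp add: finite_measure_subalgebra_def finite_measure_subalgebra_axioms_def
      subalgebra_F finite_measure_axioms)

lemma measurable_F_mono:
  "s \<in> {0..T} \<Longrightarrow> t \<in> {0..T} \<Longrightarrow> s \<le> t \<Longrightarrow> f \<in> borel_measurable (F s)
    \<Longrightarrow> f \<in> borel_measurable (F t)"
  by (rule measurable_from_subalg[OF subalgebra_F_mono])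

lemma L2T_integrable: "X \<in> L2T \<Longrightarrow> integrable M X"
  by (rule L2_integrable[OF subalgebra_F[OF T_in_range]])

lemma L2T_borel_measurable: "X \<in> L2T \<Longrightarrow> X \<in> borel_measurable M"
  by (rule L2_borel_measurable[OF subalgebra_F[OF T_in_range]])

lemma L2T_of_L2_F: "t \<in> {0..T} \<Longrightarrow> X \<in> L2 M (F t) \<Longrightarrow> X \<in> L2T"
  by (rule L2_subalgebra_mono[OF subalgebra_F_mono[OF _ T_in_range]]) auto

lemma E_F_meas:
  assumes "s \<in> {0..T}" "t \<in> {0..T}" "s \<le> t" "integrable M f" "f \<in> borel_measurable (F s)"
  shows "AE x in M. E t f x = f x"
  by (rule sigma_finite_subalgebra.real_cond_exp_F_meas[OF sigma_finite_F[OF assms(2)] assms(4)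
        measurable_F_mono[OF assms(1-3,5)]])

lemma E_tower:
  assumes "s \<in> {0..T}" "t \<in> {0..T}" "s \<le> t" "integrable M f"
  shows "AE x in M. E s (E t f) x = E s f x"
  using sigma_finite_subalgebra.real_cond_exp_nested_subalg[OF sigma_finite_F[OF assms(1)]
      subalgebra_F[OF assms(2)] subalgebra_F_mono[OF assms(1-3)] assms(4)] .

lemma E_integrable: "t \<in> {0..T} \<Longrightarrow> integrable M f \<Longrightarrow> integrable M (E t f)"
  using sigma_finite_subalgebra.real_cond_exp_int(1)[OF sigma_finite_F] .

lemma E_cong:
  "t \<in> {0..T} \<Longrightarrow> AE x in M. f x = g x \<Longrightarrow> f \<in> borel_measurable M \<Longrightarrow> g \<in> borel_measurable M
    \<Longrightarrow> AE x in M. E t f x = E t g x"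
  using sigma_finite_subalgebra.real_cond_exp_cong[OF sigma_finite_F] .

lemma E_add:
  "t \<in> {0..T} \<Longrightarrow> integrable M f \<Longrightarrow> integrable M g
    \<Longrightarrow> AE x in M. E t (\<lambda>x. f x + g x) x = E t f x + E t g x"
  using sigma_finite_subalgebra.real_cond_exp_add[OF sigma_finite_F] .

lemma E_diff:
  "t \<in> {0..T} \<Longrightarrow> integrable M f \<Longrightarrow> integrable M g
    \<Longrightarrow> AE x in M. E t (\<lambda>x. f x - g x) x = E t f x - E t g x"
  using sigma_finite_subalgebra.real_cond_exp_diff[OF sigma_finite_F] .

lemma E_mono:
  "t \<in> {0..T} \<Longrightarrow> AE x in M. f x \<le> g x \<Longrightarrow> integrable M f \<Longrightarrow> integrable M g
    \<Longrightarrow> AE x in M. E t f x \<le> E t g x"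
  using sigma_finite_subalgebra.real_cond_exp_mono[OF sigma_finite_F] .

lemma E_mult:
  "t \<in> {0..T} \<Longrightarrow> l \<in> borel_measurable (F t) \<Longrightarrow> g \<in> borel_measurable M
    \<Longrightarrow> integrable M (\<lambda>x. l x * g x) \<Longrightarrow> AE x in M. E t (\<lambda>x. l x * g x) x = l x * E t g x"
  using sigma_finite_subalgebra.real_cond_exp_mult[OF sigma_finite_F] .

lemma E_L2: "t \<in> {0..T} \<Longrightarrow> X \<in> L2T \<Longrightarrow> E t X \<in> L2 M (F t)"
  using L2_real_cond_exp[OF sigma_finite_F subalgebra_F[OF T_in_range]] .

lemma E_L2T: "t \<in> {0..T} \<Longrightarrow> X \<in> L2T \<Longrightarrow> E t X \<in> L2T"
  by (rule L2T_of_L2_F[OF _ E_L2])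

lemma increment_L2T: "j \<le> n \<Longrightarrow> X \<in> L2T \<Longrightarrow> increment j X \<in> L2T"
  using t_next_in_range[of j] tt_in_range[of j]
  by (intro L2_diff[OF subalgebra_F[OF T_in_range]] E_L2T) auto

lemma L2_map_values:
  assumes "i \<le> n" "L2_map M (F T) (F (tt i)) Di" "Z \<in> L2T"
  shows "Di Z \<in> L2T" and "AE x in M. E (tt i) (Di Z) x = Di Z x" and "AE x in M. 0 \<le> Di Z x"
proof -
  have i: "tt i \<in> {0..T}"
    by (rule tt_in_range[OF assms(1)])
  have Z: "Di Z \<in> L2 M (F (tt i))" "AE x in M. 0 \<le> Di Z x"
    using assms(2,3) unfolding L2_map_def L2_plus_def by auto
  show Z_L2T: "Di Z \<in> L2T"
    by (rule L2T_of_L2_F[OF i Z(1)])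
  have "Di Z \<in> borel_measurable (F (tt i))"
    using Z(1) unfolding L2_def by simp
  then show "AE x in M. E (tt i) (Di Z) x = Di Z x"
    by (rule E_F_meas[OF i i order_refl L2T_integrable[OF Z_L2T]])
  show "AE x in M. 0 \<le> Di Z x"
    by (rule Z(2))
qed

lemma increment_sum_L2T:
  assumes "\<And>j. j \<le> n \<Longrightarrow> L2_map M (F T) (F (tt j)) (Dt j)" "X \<in> L2T"
  shows "increment_sum Dt i X \<in> L2T"
proof (rule L2_sum[OF subalgebra_F[OF T_in_range] finite_atLeastAtMost])
  fix j assume "j \<in> {i..n}"
  then show "Dt j (increment j X) \<in> L2T"
    using L2_map_values(1)[OF _ assms(1) increment_L2T[OF _ assms(2)]] by simp
qed

lemma E_T:
  assumes "X \<in> L2T"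
  shows "AE x in M. E T X x = X x"
  using assms E_F_meas[OF T_in_range T_in_range order_refl L2T_integrable[OF assms]]
  unfolding L2_def by blast

lemma E_tower_cong:
  assumes "s \<in> {0..T}" "t \<in> {0..T}" "s \<le> t" "f \<in> borel_measurable M" "integrable M g"
    and "AE x in M. f x = E t g x"
  shows "AE x in M. E s f x = E s g x"
proof -
  have "AE x in M. E s f x = E s (E t g) x"
    by (rule E_cong[OF assms(1,6,4) borel_measurable_cond_exp2])
  with E_tower[OF assms(1-3,5)] show ?thesis
    by eventually_elim simp
qed

lemma increment_cong:
  assumes j: "j \<le> n" and "X \<in> borel_measurable M" "Y \<in> borel_measurable M" "AE x in M. X x = Y x"
  shows "AE x in M. increment j X x = increment j Y x"
proof -
  have "tt j \<in> {0..T}" "t_next j \<in> {0..T}"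
    using tt_in_range[OF j] t_next_in_range[OF j] by auto
  from E_cong[OF this(1) assms(4,2,3)] E_cong[OF this(2) assms(4,2,3)] show ?thesis
    by eventually_elim simp
qed

lemma increment_add:
  assumes j: "j \<le> n" and "integrable M X" "integrable M Y"
  shows "AE x in M. increment j (\<lambda>x. X x + Y x) x = increment j X x + increment j Y x"
proof -
  have "tt j \<in> {0..T}" "t_next j \<in> {0..T}"
    using tt_in_range[OF j] t_next_in_range[OF j] by auto
  from E_add[OF this(1) assms(2,3)] E_add[OF this(2) assms(2,3)] show ?thesis
    by eventually_elim simp
qed

lemma increment_adapted:
  assumes j: "j \<le> n" and "integrable M Y" "Y \<in> borel_measurable (F (tt j))"
  shows "AE x in M. increment j Y x = 0"
proof -
  have "tt j \<in> {0..T}" "t_next j \<in> {0..T}" "tt j \<le> t_next j"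
    using tt_in_range[OF j] t_next_in_range[OF j] by auto
  from E_F_meas[OF this(1,1) order_refl assms(2,3)] E_F_meas[OF this assms(2,3)] show ?thesis
    by eventually_elim simp
qed

lemma increment_E_before:
  assumes "k < j" "j \<le> n" "integrable M X"
  shows "AE x in M. increment k (E (tt j) X) x = increment k X x"
proof -
  have "tt k \<in> {0..T}" "t_next k \<in> {0..T}" "tt j \<in> {0..T}" "tt k \<le> tt j" "t_next k \<le> tt j"
    using assms tt_in_range[of k] t_next_in_range[of k] tt_in_range[of j] tt_mono[of k j]
      t_next_le_tt[of k j] by auto
  from E_tower[OF this(1,3,4) assms(3)] E_tower[OF this(2,3,5) assms(3)] show ?thesis
    by eventually_elim simp
qed

lemma E_increment:
  assumes j: "j \<le> n" and X: "integrable M X"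
  shows "AE x in M. E (tt j) (increment j X) x = 0"
proof -
  have t: "tt j \<in> {0..T}" "t_next j \<in> {0..T}" "tt j \<le> t_next j"
    using tt_in_range[OF j] t_next_in_range[OF j] by auto
  from E_diff[OF t(1) E_integrable[OF t(2) X] E_integrable[OF t(1) X]]
    E_tower[OF t X] E_tower[OF t(1,1) order_refl X]
  show ?thesis
    by eventually_elim simp
qed

text \<open>The increments telescope: \<open>E T X - E (tt i) X\<close> is their sum over \<open>j \<ge> i\<close>.\<close>

lemma adapted_if_increments_vanish:
  assumes i: "i \<le> n" and X: "X \<in> L2T"
    and vanish: "\<And>j. i \<le> j \<Longrightarrow> j \<le> n \<Longrightarrow> AE x in M. increment j X x = 0"
  shows "AE x in M. X x = E (tt i) X x"
proof -
  have "AE x in M. E T X x = E (tt i) X x"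
    using i
  proof (induction rule: inc_induct)
    case base
    show ?case
      using vanish[of n] i by (simp add: next_time_def)
  next
    case (step k)
    have "AE x in M. E (tt (Suc k)) X x = E (tt k) X x"
      using vanish[of k] step(1,2) by (simp add: next_time_def)
    with step(3) show ?case
      by eventually_elim simp
  qed
  with E_T[OF X] show ?thesis
    by eventually_elim simp
qed

lemma E_convex_combination:
  assumes i: "i \<le> n" and t: "t \<in> {tt i..T}" and X: "X \<in> L2T" and Y: "Y \<in> L2T"
    and l: "l \<in> Linf M (F (tt i))"
  shows "AE x in M. E t (\<lambda>x. l x * X x + (1 - l x) * Y x) x = l x * E t X x + (1 - l x) * E t Y x"
proof -
  have ti: "tt i \<in> {0..T}" and t0: "t \<in> {0..T}" and "tt i \<le> t"
    using tt_in_range[OF i] t by auto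
  have lT: "l \<in> Linf M (F T)" "(\<lambda>x. 1 - l x) \<in> Linf M (F T)"
    using Linf_subalgebra_mono[OF subalgebra_F_mono[OF ti T_in_range]] l Linf_one_minus[OF l] ti
    by auto
  have lX: "(\<lambda>x. l x * X x) \<in> L2T" and lY: "(\<lambda>x. (1 - l x) * Y x) \<in> L2T"
    using L2_mult_Linf[OF subalgebra_F[OF T_in_range]] X Y lT by auto
  have [measurable]: "l \<in> borel_measurable (F t)"
    using l measurable_F_mono[OF ti t0 \<open>tt i \<le> t\<close>] unfolding Linf_def by auto
  have "AE x in M. E t (\<lambda>x. l x * X x + (1 - l x) * Y x) x
      = E t (\<lambda>x. l x * X x) x + E t (\<lambda>x. (1 - l x) * Y x) x"
    by (rule E_add[OF t0 L2T_integrable[OF lX] L2T_integrable[OF lY]])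
  moreover have "AE x in M. E t (\<lambda>x. l x * X x) x = l x * E t X x"
    by (rule E_mult[OF t0 _ L2T_borel_measurable[OF X] L2T_integrable[OF lX]]) simp
  moreover have "AE x in M. E t (\<lambda>x. (1 - l x) * Y x) x = (1 - l x) * E t Y x"
    by (rule E_mult[OF t0 _ L2T_borel_measurable[OF Y] L2T_integrable[OF lY]]) simp
  ultimately show ?thesis
    by eventually_elim simp
qed

lemma increment_convex_combination:
  assumes "i \<le> j" "j \<le> n" "X \<in> L2T" "Y \<in> L2T" "l \<in> Linf M (F (tt i))"
  shows "AE x in M. increment j (\<lambda>x. l x * X x + (1 - l x) * Y x) x
    = l x * increment j X x + (1 - l x) * increment j Y x"
proof -
  have "i \<le> n" "tt j \<in> {tt i..T}" "t_next j \<in> {tt i..T}"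
    using assms(1,2) tt_mono[of i j] tt_in_range[of j] t_next_in_range[of j] by auto
  from E_convex_combination[OF this(1,2) assms(3-5)] E_convex_combination[OF this(1,3) assms(3-5)]
  show ?thesis
    by eventually_elim (simp add: algebra_simps)
qed

section \<open>From the axioms to the representation\<close>

lemma D_of_increment:
  assumes i: "i \<le> n" and d1: "D1 M (F T) (F (tt i)) Di" and d3: "D3 M (F T) (F (tt i)) Di"
    and X: "X \<in> L2T"
  shows "AE x in M. Di (increment i X) x = Di (E (t_next i) X) x"
proof -
  have ti: "tt i \<in> {0..T}" "tt i \<le> T" and tn: "t_next i \<in> {0..T}"
    using tt_in_range[OF i] t_next_in_range[OF i] by auto
  have "AE x in M. Di (\<lambda>x. E (t_next i) X x + - E (tt i) X x) x = Di (E (t_next i) X) x"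
    by (rule D1_D3_imp_translation_invariant[OF subalgebra_F[OF T_in_range]
          subalgebra_F_mono[OF ti(1) T_in_range ti(2)] d1 d3 E_L2T[OF tn X] L2_uminus[OF E_L2[OF ti(1) X]]])
  then show ?thesis
    by simp
qed

lemma representation_of_D1_D3_D5:
  assumes L2_map: "\<And>i. i \<le> n \<Longrightarrow> L2_map M (F T) (F (tt i)) (D i)"
    and d1: "\<And>i. i \<le> n \<Longrightarrow> D1 M (F T) (F (tt i)) (D i)"
    and d3: "\<And>i. i \<le> n \<Longrightarrow> D3 M (F T) (F (tt i)) (D i)"
    and d5: "D5 M F T tt n D"
    and i: "i \<le> n" and X: "X \<in> L2T"
  shows "AE x in M. D i X x = E (tt i) (increment_sum D i X) x"
  using i
proof (induction rule: inc_induct)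
  case base
  have "AE x in M. D n (E T X) x = D n X x"
    by (rule L2_map_cong[OF L2_map[OF order_refl] E_L2T[OF T_in_range X] X E_T[OF X]])
  moreover have "AE x in M. D n (increment n X) x = D n (E T X) x"
    using D_of_increment[OF order_refl d1[OF order_refl] d3[OF order_refl] X] by (simp add: next_time_def)
  moreover have "AE x in M. E (tt n) (D n (increment n X)) x = D n (increment n X) x"
    by (rule L2_map_values(2)[OF order_refl L2_map[OF order_refl] increment_L2T[OF order_refl X]])
  ultimately show ?case
    by eventually_elim simp
next
  case (step k)
  have k: "k \<le> n" "Suc k \<le> n" "k < n"
    using step(2) by auto
  have tk: "tt k \<in> {0..T}" "tt (Suc k) \<in> {0..T}" "tt k \<le> tt (Suc k)"
    using tt_in_range[OF k(1)] tt_in_range[OF k(2)] tt_strict_mono[OF k(3)] by auto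
  let ?S = "increment_sum D (Suc k) X"
  have S: "?S \<in> L2T"
    by (rule increment_sum_L2T[OF L2_map X])
  have Dk: "D k (increment k X) \<in> L2T"
    by (rule L2_map_values(1)[OF k(1) L2_map[OF k(1)] increment_L2T[OF k(1) X]])
  have "AE x in M. D k X x = D k (E (tt (Suc k)) X) x + E (tt k) (D (Suc k) X) x"
    using d5[unfolded D5_def, rule_format, of k "Suc k" X] k X by simp
  moreover have "AE x in M. D k (increment k X) x = D k (E (tt (Suc k)) X) x"
    using D_of_increment[OF k(1) d1[OF k(1)] d3[OF k(1)] X] k(3) by (simp add: next_time_def)
  moreover have "AE x in M. E (tt k) (D (Suc k) X) x = E (tt k) ?S x"
    by (rule E_tower_cong[OF tk L2T_borel_measurable[OF L2_map_values(1)[OF k(2) L2_map[OF k(2)] X]]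
          L2T_integrable[OF S] step(3)])
  moreover have "AE x in M. E (tt k) (D k (increment k X)) x = D k (increment k X) x"
    by (rule L2_map_values(2)[OF k(1) L2_map[OF k(1)] increment_L2T[OF k(1) X]])
  moreover have "AE x in M. E (tt k) (increment_sum D k X) x = E (tt k) (D k (increment k X)) x + E (tt k) ?S x"
    using E_add[OF tk(1) L2T_integrable[OF Dk] L2T_integrable[OF S]] k(1)
    by (simp add: sum.atLeast_Suc_atMost)
  ultimately show ?case
    by eventually_elim simp
qed

end

section \<open>From the representation to the axioms\<close>

locale represented_deviation = filtered_grid +
  fixes D Dt :: "nat \<Rightarrow> ('a \<Rightarrow> real) \<Rightarrow> 'a \<Rightarrow> real"
  assumes Dt_cond_conv_dev: "\<And>j. j \<le> n \<Longrightarrow> cond_conv_dev M (F T) (F (tt j)) (Dt j)"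
    and D_L2_map: "\<And>i. i \<le> n \<Longrightarrow> L2_map M (F T) (F (tt i)) (D i)"
    and D_zero: "\<And>i. i \<le> n \<Longrightarrow> AE x in M. D i (\<lambda>_. 0) x = 0"
    and D_representation:
      "\<And>i X. i \<le> n \<Longrightarrow> X \<in> L2T \<Longrightarrow> AE x in M. D i X x = E (tt i) (increment_sum Dt i X) x"
begin

lemma Dt_L2_map: "j \<le> n \<Longrightarrow> L2_map M (F T) (F (tt j)) (Dt j)"
  using Dt_cond_conv_dev by (simp add: cond_conv_dev_def)

lemma D_cong_increments:
  assumes i: "i \<le> n" and X: "X \<in> L2T" and Y: "Y \<in> L2T"
    and increments: "\<And>j. i \<le> j \<Longrightarrow> j \<le> n \<Longrightarrow> AE x in M. increment j X x = increment j Y x"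
  shows "AE x in M. D i X x = D i Y x"
proof -
  have "AE x in M. \<forall>j\<in>{i..n}. Dt j (increment j X) x = Dt j (increment j Y) x"
  proof (rule AE_finite_allI[OF finite_atLeastAtMost])
    fix j assume "j \<in> {i..n}"
    then have j: "i \<le> j" "j \<le> n"
      by auto
    show "AE x in M. Dt j (increment j X) x = Dt j (increment j Y) x"
      by (rule L2_map_cong[OF Dt_L2_map[OF j(2)] increment_L2T[OF j(2) X] increment_L2T[OF j(2) Y]
            increments[OF j]])
  qed
  then have "AE x in M. increment_sum Dt i X x = increment_sum Dt i Y x"
    by eventually_elim simp
  then have "AE x in M. E (tt i) (increment_sum Dt i X) x = E (tt i) (increment_sum Dt i Y) x"
    by (rule E_cong[OF tt_in_range[OF i] _ L2T_borel_measurable[OF increment_sum_L2T[OF Dt_L2_map X]]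
          L2T_borel_measurable[OF increment_sum_L2T[OF Dt_L2_map Y]]])
  with D_representation[OF i X] D_representation[OF i Y] show ?thesis
    by eventually_elim simp
qed

lemma D1_of_representation:
  assumes i: "i \<le> n"
  shows "D1 M (F T) (F (tt i)) (D i)"
  unfolding D1_def
proof (intro ballI)
  fix X m assume X: "X \<in> L2T" and m: "m \<in> Linf M (F (tt i))"
  have ti: "tt i \<in> {0..T}"
    by (rule tt_in_range[OF i])
  have mT: "m \<in> L2T"
    by (rule L2T_of_L2_F[OF ti L2_of_Linf[OF subalgebra_F[OF ti] m]])
  have Xm: "(\<lambda>x. X x + m x) \<in> L2T"
    by (rule L2_add[OF subalgebra_F[OF T_in_range] X mT])
  show "AE x in M. D i (\<lambda>x. X x + m x) x = D i X x"
  proof (rule D_cong_increments[OF i Xm X])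
    fix j assume j: "i \<le> j" "j \<le> n"
    have "m \<in> borel_measurable (F (tt j))"
      using m measurable_F_mono[OF ti tt_in_range[OF j(2)] tt_mono[OF j]] unfolding Linf_def by auto
    from increment_add[OF j(2) L2T_integrable[OF X] L2T_integrable[OF mT]]
      increment_adapted[OF j(2) L2T_integrable[OF mT] this]
    show "AE x in M. increment j (\<lambda>x. X x + m x) x = increment j X x"
      by eventually_elim simp
  qed
qed

lemma terms_vanish_if_D_vanishes:
  assumes i: "i \<le> n" and X: "X \<in> L2T" and D_vanishes: "AE x in M. D i X x = 0"
  shows "AE x in M. \<forall>j\<in>{i..n}. Dt j (increment j X) x = 0"
proof -
  have S: "increment_sum Dt i X \<in> L2T"
    by (rule increment_sum_L2T[OF Dt_L2_map X])
  have nonneg: "AE x in M. \<forall>j\<in>{i..n}. 0 \<le> Dt j (increment j X) x"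
    by (rule AE_finite_allI[OF finite_atLeastAtMost])
      (auto intro: L2_map_values(3)[OF _ Dt_L2_map increment_L2T[OF _ X]])
  then have "AE x in M. 0 \<le> increment_sum Dt i X x"
    by eventually_elim (auto intro: sum_nonneg)
  moreover have "integral\<^sup>L M (increment_sum Dt i X) = 0"
  proof -
    have "AE x in M. E (tt i) (increment_sum Dt i X) x = 0"
      using D_representation[OF i X] D_vanishes by eventually_elim simp
    then have "integral\<^sup>L M (E (tt i) (increment_sum Dt i X)) = 0"
      by (rule integral_eq_zero_AE)
    then show ?thesis
      using sigma_finite_subalgebra.real_cond_exp_int(2)[OF sigma_finite_F[OF tt_in_range[OF i]]
          L2T_integrable[OF S]] by simp
  qed
  ultimately have "AE x in M. increment_sum Dt i X x = 0"
    using integral_nonneg_eq_0_iff_AE[OF L2T_integrable[OF S]] by simp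
  with nonneg show ?thesis
  proof eventually_elim
    case (elim x)
    then show ?case
      using sum_nonneg_eq_0_iff[of "{i..n}" "\<lambda>j. Dt j (increment j X) x"] by simp
  qed
qed

lemma increment_vanishes_if_Dt_vanishes:
  assumes j: "j \<le> n" and X: "X \<in> L2T" and Dt_vanishes: "AE x in M. Dt j (increment j X) x = 0"
  shows "AE x in M. increment j X x = 0"
proof -
  have tj: "tt j \<in> {0..T}"
    by (rule tt_in_range[OF j])
  have inc: "increment j X \<in> L2T"
    by (rule increment_L2T[OF j X])
  have "D2 M (F T) (F (tt j)) (Dt j)"
    using Dt_cond_conv_dev[OF j] by (simp add: cond_conv_dev_def)
  then obtain Y where Y: "Y \<in> borel_measurable (F (tt j))" "AE x in M. increment j X x = Y x"
    using Dt_vanishes unfolding D2_def by (blast dest: bspec[OF _ inc])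
  have Y_M: "Y \<in> borel_measurable M"
    by (rule measurable_from_subalg[OF subalgebra_F[OF tj] Y(1)])
  have "AE x in M. E (tt j) (increment j X) x = E (tt j) Y x"
    by (rule E_cong[OF tj Y(2) L2T_borel_measurable[OF inc] Y_M])
  moreover have "AE x in M. E (tt j) Y x = Y x"
    by (rule E_F_meas[OF tj tj order_refl integrable_cong_AE_imp[OF L2T_integrable[OF inc] Y_M Y(2)] Y(1)])
  moreover have "AE x in M. E (tt j) (increment j X) x = 0"
    by (rule E_increment[OF j L2T_integrable[OF X]])
  ultimately show ?thesis
    using Y(2) by eventually_elim simp
qed

lemma D2_of_representation:
  assumes i: "i \<le> n"
  shows "D2 M (F T) (F (tt i)) (D i)"
  unfolding D2_def
proof (intro ballI conjI iffI)
  fix X assume X: "X \<in> L2T"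
  show "AE x in M. 0 \<le> D i X x"
    by (rule L2_map_values(3)[OF i D_L2_map[OF i] X])
next
  fix X assume X: "X \<in> L2T" and "AE x in M. D i X x = 0"
  then have terms: "AE x in M. \<forall>j\<in>{i..n}. Dt j (increment j X) x = 0"
    by (rule terms_vanish_if_D_vanishes[OF i])
  have "AE x in M. X x = E (tt i) X x"
  proof (rule adapted_if_increments_vanish[OF i X])
    fix j assume j: "i \<le> j" "j \<le> n"
    from terms have "AE x in M. Dt j (increment j X) x = 0"
      by eventually_elim (use j in simp)
    then show "AE x in M. increment j X x = 0"
      by (rule increment_vanishes_if_Dt_vanishes[OF j(2) X])
  qed
  then show "\<exists>Y\<in>borel_measurable (F (tt i)). AE x in M. X x = Y x"
    using borel_measurable_cond_exp by blast
next
  fix X assume X: "X \<in> L2T" and "\<exists>Y\<in>borel_measurable (F (tt i)). AE x in M. X x = Y x"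
  then obtain Y where Y: "Y \<in> borel_measurable (F (tt i))" "AE x in M. X x = Y x"
    by blast
  have ti: "tt i \<in> {0..T}"
    by (rule tt_in_range[OF i])
  have Y_M: "Y \<in> borel_measurable M"
    by (rule measurable_from_subalg[OF subalgebra_F[OF ti] Y(1)])
  have Y_int: "integrable M Y"
    by (rule integrable_cong_AE_imp[OF L2T_integrable[OF X] Y_M Y(2)])
  have "AE x in M. D i X x = D i (\<lambda>_. 0) x"
  proof (rule D_cong_increments[OF i X L2_zero])
    fix j assume j: "i \<le> j" "j \<le> n"
    have "Y \<in> borel_measurable (F (tt j))"
      by (rule measurable_F_mono[OF ti tt_in_range[OF j(2)] tt_mono[OF j] Y(1)])
    from increment_cong[OF j(2) L2T_borel_measurable[OF X] Y_M Y(2)] increment_adapted[OF j(2) Y_int this]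
      increment_adapted[OF j(2) integrable_zero borel_measurable_const]
    show "AE x in M. increment j X x = increment j (\<lambda>_. 0) x"
      by eventually_elim simp
  qed
  with D_zero[OF i] show "AE x in M. D i X x = 0"
    by eventually_elim simp
qed

lemma D3_of_representation:
  assumes i: "i \<le> n"
  shows "D3 M (F T) (F (tt i)) (D i)"
  unfolding D3_def
proof (intro ballI impI)
  fix X Y l assume X: "X \<in> L2T" and Y: "Y \<in> L2T" and l: "l \<in> Linf M (F (tt i))"
    and l01: "AE x in M. 0 \<le> l x \<and> l x \<le> 1"
  let ?Z = "\<lambda>x. l x * X x + (1 - l x) * Y x"
  have ti: "tt i \<in> {0..T}"
    by (rule tt_in_range[OF i])
  have lT: "l \<in> Linf M (F T)"
    by (rule Linf_subalgebra_mono[OF subalgebra_F_mono[OF ti T_in_range] l]) (use ti in simp)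
  have Z: "?Z \<in> L2T"
    by (rule L2_convex_combination[OF subalgebra_F[OF T_in_range] X Y lT])
  have "AE x in M. \<forall>j\<in>{i..n}.
      Dt j (increment j ?Z) x \<le> l x * Dt j (increment j X) x + (1 - l x) * Dt j (increment j Y) x"
  proof (rule AE_finite_allI[OF finite_atLeastAtMost])
    fix j assume "j \<in> {i..n}"
    then have j: "i \<le> j" "j \<le> n"
      by auto
    have lj: "l \<in> Linf M (F (tt j))"
      by (rule Linf_subalgebra_mono[OF subalgebra_F_mono[OF ti tt_in_range[OF j(2)] tt_mono[OF j]] l])
    have V: "(\<lambda>x. l x * increment j X x + (1 - l x) * increment j Y x) \<in> L2T"
      by (rule L2_convex_combination[OF subalgebra_F[OF T_in_range] increment_L2T[OF j(2) X]
            increment_L2T[OF j(2) Y] lT])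
    have "AE x in M. Dt j (increment j ?Z) x
        = Dt j (\<lambda>x. l x * increment j X x + (1 - l x) * increment j Y x) x"
      by (rule L2_map_cong[OF Dt_L2_map[OF j(2)] increment_L2T[OF j(2) Z] V
            increment_convex_combination[OF j X Y l]])
    moreover have "AE x in M. Dt j (\<lambda>x. l x * increment j X x + (1 - l x) * increment j Y x) x
        \<le> l x * Dt j (increment j X) x + (1 - l x) * Dt j (increment j Y) x"
    proof -
      have "D3 M (F T) (F (tt j)) (Dt j)"
        using Dt_cond_conv_dev[OF j(2)] by (simp add: cond_conv_dev_def)
      from this[unfolded D3_def, rule_format, OF increment_L2T[OF j(2) X] increment_L2T[OF j(2) Y] lj l01]
      show ?thesis .
    qed
    ultimately show "AE x in M. Dt j (increment j ?Z) x
        \<le> l x * Dt j (increment j X) x + (1 - l x) * Dt j (increment j Y) x"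
      by eventually_elim simp
  qed
  then have "AE x in M. increment_sum Dt i ?Z x
      \<le> l x * increment_sum Dt i X x + (1 - l x) * increment_sum Dt i Y x"
  proof eventually_elim
    case (elim x)
    then have "increment_sum Dt i ?Z x
        \<le> (\<Sum>j\<in>{i..n}. l x * Dt j (increment j X) x + (1 - l x) * Dt j (increment j Y) x)"
      by (auto intro: sum_mono)
    also have "\<dots> = l x * increment_sum Dt i X x + (1 - l x) * increment_sum Dt i Y x"
      by (simp add: sum.distrib sum_distrib_left)
    finally show ?case .
  qed
  then have "AE x in M. E (tt i) (increment_sum Dt i ?Z) x
      \<le> E (tt i) (\<lambda>x. l x * increment_sum Dt i X x + (1 - l x) * increment_sum Dt i Y x) x"
    by (intro E_mono[OF ti] L2T_integrable increment_sum_L2T[OF Dt_L2_map Z]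
        L2_convex_combination[OF subalgebra_F[OF T_in_range] _ _ lT] increment_sum_L2T[OF Dt_L2_map X]
        increment_sum_L2T[OF Dt_L2_map Y])
  moreover have "AE x in M. E (tt i) (\<lambda>x. l x * increment_sum Dt i X x + (1 - l x) * increment_sum Dt i Y x) x
      = l x * E (tt i) (increment_sum Dt i X) x + (1 - l x) * E (tt i) (increment_sum Dt i Y) x"
    using E_convex_combination[OF i _ increment_sum_L2T[OF Dt_L2_map X] increment_sum_L2T[OF Dt_L2_map Y] l]
      ti by simp
  ultimately show "AE x in M. D i ?Z x \<le> l x * D i X x + (1 - l x) * D i Y x"
    using D_representation[OF i Z] D_representation[OF i X] D_representation[OF i Y]
    by eventually_elim simp
qed

lemma increment_sum_E:
  assumes ij: "i \<le> j" and j: "j \<le> n" and X: "X \<in> L2T"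
  shows "AE x in M. increment_sum Dt i (E (tt j) X) x = (\<Sum>k\<in>{i..<j}. Dt k (increment k X) x)"
proof -
  have tj: "tt j \<in> {0..T}"
    by (rule tt_in_range[OF j])
  have W: "E (tt j) X \<in> L2T"
    by (rule E_L2T[OF tj X])
  have "AE x in M. \<forall>k\<in>{i..<j}. Dt k (increment k (E (tt j) X)) x = Dt k (increment k X) x"
  proof (rule AE_finite_allI[OF finite_atLeastLessThan])
    fix k assume "k \<in> {i..<j}"
    then have k: "k < j" "k \<le> n"
      using j by auto
    show "AE x in M. Dt k (increment k (E (tt j) X)) x = Dt k (increment k X) x"
      by (rule L2_map_cong[OF Dt_L2_map[OF k(2)] increment_L2T[OF k(2) W] increment_L2T[OF k(2) X]
            increment_E_before[OF k(1) j L2T_integrable[OF X]]])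
  qed
  moreover have "AE x in M. \<forall>k\<in>{j..n}. Dt k (increment k (E (tt j) X)) x = 0"
  proof (rule AE_finite_allI[OF finite_atLeastAtMost])
    fix k assume "k \<in> {j..n}"
    then have k: "j \<le> k" "k \<le> n"
      by auto
    have "E (tt j) X \<in> borel_measurable (F (tt k))"
      by (rule measurable_F_mono[OF tj tt_in_range[OF k(2)] tt_mono[OF k] borel_measurable_cond_exp])
    then have "AE x in M. increment k (E (tt j) X) x = 0"
      by (rule increment_adapted[OF k(2) L2T_integrable[OF W]])
    then have "AE x in M. Dt k (increment k (E (tt j) X)) x = Dt k (\<lambda>_. 0) x"
      by (rule L2_map_cong[OF Dt_L2_map[OF k(2)] increment_L2T[OF k(2) W] L2_zero])
    moreover have "AE x in M. Dt k (\<lambda>_. 0) x = 0"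
      using Dt_cond_conv_dev[OF k(2)] by (simp add: cond_conv_dev_def)
    ultimately show "AE x in M. Dt k (increment k (E (tt j) X)) x = 0"
      by eventually_elim simp
  qed
  ultimately show ?thesis
    by eventually_elim (simp add: sum_atLeastAtMost_split[OF ij j])
qed

lemma D5_of_representation: "D5 M F T tt n D"
  unfolding D5_def
proof (intro allI impI, elim conjE)
  fix i j X assume ij: "i \<le> j" and j: "j \<le> n" and X: "X \<in> L2T"
  have i: "i \<le> n"
    using ij j by simp
  have t: "tt i \<in> {0..T}" "tt j \<in> {0..T}" "tt i \<le> tt j"
    using tt_in_range[OF i] tt_in_range[OF j] tt_mono[OF ij j] by auto
  let ?P = "\<lambda>x. \<Sum>k\<in>{i..<j}. Dt k (increment k X) x"
  let ?S = "increment_sum Dt j X"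
  have P: "?P \<in> L2T"
    by (rule L2_sum[OF subalgebra_F[OF T_in_range] finite_atLeastLessThan])
      (use j in \<open>auto intro: L2_map_values(1)[OF _ Dt_L2_map increment_L2T[OF _ X]]\<close>)
  have S: "?S \<in> L2T"
    by (rule increment_sum_L2T[OF Dt_L2_map X])
  have "AE x in M. D i (E (tt j) X) x = E (tt i) ?P x"
  proof -
    have "AE x in M. E (tt i) (increment_sum Dt i (E (tt j) X)) x = E (tt i) ?P x"
      by (rule E_cong[OF t(1) increment_sum_E[OF ij j X] L2T_borel_measurable L2T_borel_measurable[OF P]])
        (intro increment_sum_L2T Dt_L2_map E_L2T[OF t(2) X])
    with D_representation[OF i E_L2T[OF t(2) X]] show ?thesis
      by eventually_elim simp
  qed
  moreover have "AE x in M. E (tt i) (D j X) x = E (tt i) ?S x"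
    by (rule E_tower_cong[OF t L2T_borel_measurable[OF L2_map_values(1)[OF j D_L2_map[OF j] X]]
          L2T_integrable[OF S] D_representation[OF j X]])
  moreover have "AE x in M. E (tt i) (increment_sum Dt i X) x = E (tt i) ?P x + E (tt i) ?S x"
    using E_add[OF t(1) L2T_integrable[OF P] L2T_integrable[OF S]]
    by (simp add: sum_atLeastAtMost_split[OF ij j])
  ultimately show "AE x in M. D i X x = D i (E (tt j) X) x + E (tt i) (D j X) x"
    using D_representation[OF i X] by eventually_elim simp
qed

end

theorem proposition1:
  fixes M :: "'a measure" and F :: "real \<Rightarrow> 'a measure" and T :: real
    and tt :: "nat \<Rightarrow> real" and n :: nat
    and D :: "nat \<Rightarrow> ('a \<Rightarrow> real) \<Rightarrow> ('a \<Rightarrow> real)"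
  assumes "prob_space M"
    and "filtration M T F"
    and "0 \<le> tt 0" and "tt n \<le> T" and "\<And>i. i < n \<Longrightarrow> tt i < tt (Suc i)"
    and "\<And>i. i \<le> n \<Longrightarrow> L2_map M (F T) (F (tt i)) (D i)"
    and "\<And>i. i \<le> n \<Longrightarrow> AE \<omega> in M. D i (\<lambda>_. 0) \<omega> = 0"
  shows "(((\<forall>i \<le> n. D1 M (F T) (F (tt i)) (D i) \<and> D2 M (F T) (F (tt i)) (D i)
                    \<and> D3 M (F T) (F (tt i)) (D i)) \<and> D5 M F T tt n D)
         \<longleftrightarrow>
         (\<exists>Dt :: nat \<Rightarrow> ('a \<Rightarrow> real) \<Rightarrow> ('a \<Rightarrow> real).
            (\<forall>i \<le> n. cond_conv_dev M (F T) (F (tt i)) (Dt i)) \<and>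
            (\<forall>i \<le> n. \<forall>X \<in> L2 M (F T). AE \<omega> in M. D i X \<omega> =
               real_cond_exp M (F (tt i))
                 (\<lambda>x. \<Sum>j\<in>{i..n}. Dt j (\<lambda>y. real_cond_exp M (F (next_time tt n T j)) X y
                                            - real_cond_exp M (F (tt j)) X y) x) \<omega>)))
   \<and> (((\<forall>i \<le> n. D1 M (F T) (F (tt i)) (D i) \<and> D2 M (F T) (F (tt i)) (D i)
                    \<and> D3 M (F T) (F (tt i)) (D i)) \<and> D5 M F T tt n D)
         \<longrightarrow>
         (\<forall>i \<le> n. \<forall>X \<in> L2 M (F T). AE \<omega> in M. D i X \<omega> =
               real_cond_exp M (F (tt i))
                 (\<lambda>x. \<Sum>j\<in>{i..n}. D j (\<lambda>y. real_cond_exp M (F (next_time tt n T j)) X y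
                                            - real_cond_exp M (F (tt j)) X y) x) \<omega>))"
proof -
  have grid: "filtered_grid M F T tt n"
    using assms(1-5) by (intro filtered_grid.intro filtered_grid_axioms.intro)
  interpret filtered_grid M F T tt n
    by (rule grid)
  let ?axioms = "(\<forall>i \<le> n. D1 M (F T) (F (tt i)) (D i) \<and> D2 M (F T) (F (tt i)) (D i)
    \<and> D3 M (F T) (F (tt i)) (D i)) \<and> D5 M F T tt n D"
  have representation: "\<forall>i \<le> n. \<forall>X \<in> L2T. AE \<omega> in M. D i X \<omega> = E (tt i) (increment_sum D i X) \<omega>"
    if ?axioms
    using that representation_of_D1_D3_D5[OF assms(6)] by simp
  have cond_conv_dev: "\<forall>i \<le> n. cond_conv_dev M (F T) (F (tt i)) (D i)" if ?axioms
    using that assms(6,7) unfolding cond_conv_dev_def by simp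
  have axioms: ?axioms
    if "\<forall>i \<le> n. cond_conv_dev M (F T) (F (tt i)) (Dt i)"
      and "\<forall>i \<le> n. \<forall>X \<in> L2T. AE \<omega> in M. D i X \<omega> = E (tt i) (increment_sum Dt i X) \<omega>" for Dt
  proof -
    interpret represented_deviation M F T tt n D Dt
      using that assms(6,7)
      by (intro represented_deviation.intro[OF grid] represented_deviation_axioms.intro) auto
    show ?thesis
      using D1_of_representation D2_of_representation D3_of_representation D5_of_representation by simp
  qed
  show ?thesis
    using representation cond_conv_dev axioms by blast
qed

end
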